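(* Let $n\ge3$, $1\le j\le n-2$ and $K\in\mathcal K^n$. Then $$\operatorname{ext}(K[j],B_L^{n-1}[n-1-j])=\{z\in\mathbb S^{n-1}:\exists E\in G(\ell,j+1)\text{ such that }z\in\operatorname{ext}_E(\operatorname{proj}_EK)\}.$$
   Context: $\mathcal K^n$ is the set of convex bodies in $\mathbb R^n$; $\ell=\operatorname{span}\{e_n\}$, $L=\ell^\perp$, $B_L^{n-1}=B^n\cap L$; $K[m]$ means $K$ repeated $m$ times; $G(\ell,m)=\{E\in G(n,m):\ell\subseteq E\}$; $\operatorname{proj}_E$ is orthogonal projection. For $K\in\mathcal K^n$, $z\ne o$: $F(K,z)=\{x\in K:\langle x,z\rangle=h_K(z)\}$; $N(K,x)$ is the normal cone at $x\in\partial K$ and $N(K,F)=N(K,x)$ for $x$ in the relative interior of a nonempty convex $F\subseteq K$; the touching cone $T(K,z)$ is the unique face of $N(K,F(K,z))$ containing $z$ in its relative interior. $z\in\mathbb S^{n-1}$ is $(K_1,\dots,K_{n-1})$-extreme if there exist linear hyperplanes $E_i\supseteq T(K_i,z)$, $i=1,\dots,n-1$, with $\dim(E_1\cap\dots\cap E_{n-1})=1$; $\operatorname{ext}(K_1,\dots,K_{n-1})$ is the set of such $z$. For a convex body $M$ in a linear subspace $E$, $\operatorname{ext}_E(M)$ is the set of unit vectors $z\in E$ that are outer normals of $M$ (relative to $E$) at some boundary point $x$ and cannot be written as a sum of two linearly independent outer normal vectors of $M$ at $x$ in $E$. *)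

theory Defs
  imports "HOL-Analysis.Analysis"
begin

definition convex_body :: "'a::euclidean_space set \<Rightarrow> bool" where
  "convex_body K \<longleftrightarrow> K \<noteq> {} \<and> compact K \<and> convex K"

definition supp_fun :: "'a::euclidean_space set \<Rightarrow> 'a \<Rightarrow> real" where
  "supp_fun K z = Sup ((\<lambda>x. x \<bullet> z) ` K)"

definition supp_set :: "'a::euclidean_space set \<Rightarrow> 'a \<Rightarrow> 'a set" where
  "supp_set K z = {x \<in> K. x \<bullet> z = supp_fun K z}"

definition normal_cone :: "'a::euclidean_space set \<Rightarrow> 'a \<Rightarrow> 'a set" where
  "normal_cone K x = {u. \<forall>y\<in>K. u \<bullet> (y - x) \<le> 0}"

definition normal_cone_face :: "'a::euclidean_space set \<Rightarrow> 'a set \<Rightarrow> 'a set" where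
  "normal_cone_face K F = normal_cone K (SOME x. x \<in> rel_interior F)"

definition touching_cone :: "'a::euclidean_space set \<Rightarrow> 'a \<Rightarrow> 'a set" where
  "touching_cone K z =
     (THE G. G face_of normal_cone_face K (supp_set K z) \<and> z \<in> rel_interior G)"

definition lin_hyperplane :: "'a::euclidean_space set \<Rightarrow> bool" where
  "lin_hyperplane E \<longleftrightarrow> subspace E \<and> dim E = DIM('a) - 1"

text \<open>ext(K_0,...,K_{n-2}) for a family of n-1 convex bodies indexed by 0..n-2.\<close>
definition ext_mixed :: "(nat \<Rightarrow> 'a::euclidean_space set) \<Rightarrow> 'a set" where
  "ext_mixed Ks = {z. norm z = 1 \<and>
     (\<exists>Es. (\<forall>i < DIM('a) - 1. lin_hyperplane (Es i) \<and> touching_cone (Ks i) z \<subseteq> Es i)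
           \<and> dim (\<Inter>i\<in>{..<DIM('a) - 1}. Es i) = 1)}"

text \<open>Grassmannian G(span{u}, m) of m-dim linear subspaces containing u.\<close>
definition grass_thru :: "'a::euclidean_space \<Rightarrow> nat \<Rightarrow> 'a set set" where
  "grass_thru u m = {E. subspace E \<and> dim E = m \<and> u \<in> E}"

definition proj_onto :: "'a::euclidean_space set \<Rightarrow> 'a \<Rightarrow> 'a" where
  "proj_onto E x = (THE y. y \<in> E \<and> (\<forall>w\<in>E. (x - y) \<bullet> w = 0))"

definition ext_rel :: "'a::euclidean_space set \<Rightarrow> 'a set \<Rightarrow> 'a set" where
  "ext_rel E M = {z. z \<in> E \<and> norm z = 1 \<and>
     (\<exists>x \<in> M. \<not> (\<exists>e>0. ball x e \<inter> E \<subseteq> M) \<and>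
        z \<in> normal_cone M x \<and>
        \<not> (\<exists>u v. u \<in> normal_cone M x \<inter> E \<and> v \<in> normal_cone M x \<inter> E \<and>
               u \<noteq> v \<and> independent {u, v} \<and> z = u + v))}"

end

theory Submission
  imports Defs
begin

text \<open>
  For a convex cone \<open>C\<close> and \<open>z \<in> C\<close>, the smallest face of \<open>C\<close> containing \<open>z\<close> in its relative
  interior is \<open>C \<inter> D\<close>, where \<open>D\<close> is the space of directions \<open>d\<close> with \<open>z \<plusminus> \<epsilon> d \<in> C\<close>.
  Hence the span of the touching cone \<open>T(K,z)\<close> is this direction space \<open>S\<close> of the normal cone
  \<open>N(K,x)\<close> at any \<open>x \<in> F(K,z)\<close>, while for \<open>B\<^sub>L\<close> it is \<open>span {e, z}\<close>.
  Passing to normal vectors of the hyperplanes, \<open>z\<close> is \<open>(K[j], B\<^sub>L[n-1-j])\<close>-extreme iff some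
  \<open>(j+1)\<close>-dimensional subspace \<open>E \<ni> e, z\<close> satisfies \<open>S \<inter> E \<subseteq> span {z}\<close>.
  Since \<open>N(proj\<^sub>E K, proj\<^sub>E x) \<inter> E = N(K,x) \<inter> E\<close>, the latter says precisely that \<open>z\<close> is not
  the sum of two independent normals of \<open>proj\<^sub>E K\<close> in \<open>E\<close>, i.e. \<open>z \<in> ext\<^sub>E(proj\<^sub>E K)\<close>.
\<close>

lemma independent_pair_iff:
  fixes u v :: "'a::real_vector"
  shows "u \<noteq> v \<and> independent {u, v} \<longleftrightarrow> (\<forall>a b. a *\<^sub>R u + b *\<^sub>R v = 0 \<longrightarrow> a = 0 \<and> b = 0)"
proof
  assume "u \<noteq> v \<and> independent {u, v}"
  then have v: "v \<noteq> 0" and u: "u \<notin> span {v}"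
    by (auto simp: independent_insert)
  show "\<forall>a b. a *\<^sub>R u + b *\<^sub>R v = 0 \<longrightarrow> a = 0 \<and> b = 0"
  proof (intro allI impI)
    fix a b assume ab: "a *\<^sub>R u + b *\<^sub>R v = 0"
    have "a = 0"
    proof (rule ccontr)
      assume "a \<noteq> 0"
      then have "u = (1 / a) *\<^sub>R (a *\<^sub>R u)" by simp
      also have "a *\<^sub>R u = (- b) *\<^sub>R v" using ab by (simp add: eq_neg_iff_add_eq_0)
      finally have "u = (- b / a) *\<^sub>R v" by simp
      then show False using u by (metis span_base span_scale singletonI)
    qed
    then show "a = 0 \<and> b = 0" using ab v by simp
  qed
next
  assume indep: "\<forall>a b. a *\<^sub>R u + b *\<^sub>R v = 0 \<longrightarrow> a = 0 \<and> b = 0"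
  have "u \<noteq> v" using indep[rule_format, of 1 "-1"] by auto
  moreover have "v \<noteq> 0" using indep[rule_format, of 0 1] by auto
  moreover have "u \<notin> span {v}"
  proof
    assume "u \<in> span {v}"
    then obtain c where "u = c *\<^sub>R v" by (auto simp: span_singleton)
    then show False using indep[rule_format, of 1 "-c"] by simp
  qed
  ultimately show "u \<noteq> v \<and> independent {u, v}" by (simp add: independent_insert)
qed

definition face_dirs :: "'a::real_vector set \<Rightarrow> 'a \<Rightarrow> 'a set" where
  "face_dirs C z = {d. \<exists>\<epsilon>>0. z + \<epsilon> *\<^sub>R d \<in> C \<and> z - \<epsilon> *\<^sub>R d \<in> C}"

lemma face_dirsE:
  assumes "convex C" and "d \<in> face_dirs C z"
  obtains \<epsilon> where "\<epsilon> > 0" and "\<And>t. \<bar>t\<bar> \<le> \<epsilon> \<Longrightarrow> z + t *\<^sub>R d \<in> C"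
proof -
  obtain \<epsilon> where \<epsilon>: "\<epsilon> > 0" "z + \<epsilon> *\<^sub>R d \<in> C" "z - \<epsilon> *\<^sub>R d \<in> C"
    using assms(2) by (auto simp: face_dirs_def)
  have "z + t *\<^sub>R d \<in> C" if "\<bar>t\<bar> \<le> \<epsilon>" for t
  proof -
    define a b where "a = (\<epsilon> - t) / (2 * \<epsilon>)" and "b = (\<epsilon> + t) / (2 * \<epsilon>)"
    have "a + b = 1" "(b - a) * \<epsilon> = t"
      using \<epsilon>(1) by (simp_all add: a_def b_def field_simps)
    have "a *\<^sub>R (z - \<epsilon> *\<^sub>R d) + b *\<^sub>R (z + \<epsilon> *\<^sub>R d) = (a + b) *\<^sub>R z + ((b - a) * \<epsilon>) *\<^sub>R d"
      by (simp add: algebra_simps)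
    then have "z + t *\<^sub>R d = a *\<^sub>R (z - \<epsilon> *\<^sub>R d) + b *\<^sub>R (z + \<epsilon> *\<^sub>R d)"
      using \<open>a + b = 1\<close> \<open>(b - a) * \<epsilon> = t\<close> by simp
    also have "\<dots> \<in> C"
      using that \<epsilon> \<open>a + b = 1\<close> by (intro convexD [OF assms(1)]) (auto simp: a_def b_def)
    finally show ?thesis .
  qed
  with \<epsilon>(1) that show ?thesis by blast
qed

lemma subspace_face_dirs:
  assumes "convex C" and "z \<in> C"
  shows "subspace (face_dirs C z)"
  unfolding subspace_def
proof (intro conjI ballI allI)
  show "0 \<in> face_dirs C z"
    using assms(2) by (auto simp: face_dirs_def intro: exI [of _ 1])
next
  fix x y assume x: "x \<in> face_dirs C z" and y: "y \<in> face_dirs C z"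
  obtain \<epsilon>\<^sub>1 where \<epsilon>\<^sub>1: "\<epsilon>\<^sub>1 > 0" "\<And>t. \<bar>t\<bar> \<le> \<epsilon>\<^sub>1 \<Longrightarrow> z + t *\<^sub>R x \<in> C"
    using face_dirsE [OF assms(1) x] by blast
  obtain \<epsilon>\<^sub>2 where \<epsilon>\<^sub>2: "\<epsilon>\<^sub>2 > 0" "\<And>t. \<bar>t\<bar> \<le> \<epsilon>\<^sub>2 \<Longrightarrow> z + t *\<^sub>R y \<in> C"
    using face_dirsE [OF assms(1) y] by blast
  define \<epsilon> where "\<epsilon> = min \<epsilon>\<^sub>1 \<epsilon>\<^sub>2 / 2"
  have sum_in: "z + t *\<^sub>R (x + y) \<in> C" if "\<bar>t\<bar> \<le> \<epsilon>" for t
  proof -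
    have "z + t *\<^sub>R (x + y) = (1/2) *\<^sub>R (z + (2 * t) *\<^sub>R x) + (1/2) *\<^sub>R (z + (2 * t) *\<^sub>R y)"
      by (simp add: algebra_simps flip: scaleR_add_left)
    also have "\<dots> \<in> C"
      using that \<epsilon>\<^sub>1 \<epsilon>\<^sub>2 by (intro convexD [OF assms(1)]) (auto simp: \<epsilon>_def)
    finally show ?thesis .
  qed
  have "\<epsilon> > 0" using \<epsilon>\<^sub>1(1) \<epsilon>\<^sub>2(1) by (simp add: \<epsilon>_def)
  then show "x + y \<in> face_dirs C z"
    using sum_in [of \<epsilon>] sum_in [of "- \<epsilon>"] unfolding face_dirs_def by auto
next
  fix c x assume x: "x \<in> face_dirs C z"
  obtain \<epsilon> where \<epsilon>: "\<epsilon> > 0" "\<And>t. \<bar>t\<bar> \<le> \<epsilon> \<Longrightarrow> z + t *\<^sub>R x \<in> C"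
    using face_dirsE [OF assms(1) x] by blast
  show "c *\<^sub>R x \<in> face_dirs C z"
  proof (cases "c = 0")
    case True
    then show ?thesis using assms(2) by (auto simp: face_dirs_def intro: exI [of _ 1])
  next
    case False
    have scale: "\<bar>\<epsilon> / \<bar>c\<bar> * c\<bar> = \<epsilon>" using False \<epsilon>(1) by (simp add: abs_mult)
    have "z + (\<epsilon> / \<bar>c\<bar>) *\<^sub>R (c *\<^sub>R x) \<in> C"
      using \<epsilon>(2) [of "\<epsilon> / \<bar>c\<bar> * c"] scale by simp
    moreover have "z - (\<epsilon> / \<bar>c\<bar>) *\<^sub>R (c *\<^sub>R x) \<in> C"
      using \<epsilon>(2) [of "- (\<epsilon> / \<bar>c\<bar> * c)"] scale by simp
    ultimately show ?thesis
      using False \<epsilon>(1) unfolding face_dirs_def by (intro CollectI exI [of _ "\<epsilon> / \<bar>c\<bar>"]) simp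
  qed
qed

lemma face_dirs_Int_subspace:
  assumes "subspace E" and "z \<in> E"
  shows "face_dirs (C \<inter> E) z = face_dirs C z \<inter> E"
proof (intro equalityI subsetI IntI)
  fix d assume "d \<in> face_dirs (C \<inter> E) z"
  then obtain \<epsilon> where \<epsilon>: "\<epsilon> > 0" "z + \<epsilon> *\<^sub>R d \<in> C \<inter> E" "z - \<epsilon> *\<^sub>R d \<in> C \<inter> E"
    by (auto simp: face_dirs_def)
  then show "d \<in> face_dirs C z" by (auto simp: face_dirs_def)
  have "(1 / \<epsilon>) *\<^sub>R ((z + \<epsilon> *\<^sub>R d) - z) \<in> E"
    using \<epsilon> assms by (intro subspace_scale subspace_diff) auto
  then show "d \<in> E" using \<epsilon>(1) by simp
next
  fix d assume "d \<in> face_dirs C z \<inter> E"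
  then show "d \<in> face_dirs (C \<inter> E) z"
    using assms by (auto simp: face_dirs_def intro: subspace_add subspace_diff subspace_scale)
qed

lemma self_in_face_dirs:
  assumes "convex_cone C" and "z \<in> C"
  shows "z \<in> face_dirs C z"
proof -
  have "z + (1/2) *\<^sub>R z = (1 + 1/2) *\<^sub>R z" "z - (1/2) *\<^sub>R z = (1 - 1/2) *\<^sub>R z"
    by (simp_all only: scaleR_add_left scaleR_diff_left scaleR_one)
  then show ?thesis
    using assms unfolding face_dirs_def by (intro CollectI exI [of _ "1/2"]) (simp add: convex_cone_scaleR)
qed

lemma face_of_face_dirs:
  assumes "convex_cone C" and "z \<in> C"
  shows "C \<inter> face_dirs C z face_of C"
  unfolding face_of_def
proof (intro conjI ballI impI)
  show "convex (C \<inter> face_dirs C z)"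
    using assms by (intro convex_Int subspace_imp_convex [OF subspace_face_dirs]) (auto simp: convex_cone_def)
next
  fix a b x assume a: "a \<in> C" and b: "b \<in> C" and x: "x \<in> C \<inter> face_dirs C z" and "x \<in> open_segment a b"
  then obtain t where t: "0 < t" "t < 1" "x = (1 - t) *\<^sub>R a + t *\<^sub>R b"
    by (auto simp: in_segment)
  obtain \<epsilon> where \<epsilon>: "\<epsilon> > 0" "z - \<epsilon> *\<^sub>R x \<in> C"
    using x by (auto simp: face_dirs_def)
  \<comment> \<open>\<open>z - \<epsilon> x\<close> splits off a positive multiple of either endpoint\<close>
  have split: "z - (\<epsilon> * (1 - t)) *\<^sub>R a = (z - \<epsilon> *\<^sub>R x) + (\<epsilon> * t) *\<^sub>R b"
              "z - (\<epsilon> * t) *\<^sub>R b = (z - \<epsilon> *\<^sub>R x) + (\<epsilon> * (1 - t)) *\<^sub>R a"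
    by (simp_all add: t(3) algebra_simps)
  have "z - (\<epsilon> * (1 - t)) *\<^sub>R a \<in> C" "z - (\<epsilon> * t) *\<^sub>R b \<in> C"
    unfolding split using \<epsilon> t a b
    by (intro convex_cone_add [OF assms(1)] convex_cone_scaleR [OF assms(1)]; simp)+
  moreover have "z + (\<epsilon> * (1 - t)) *\<^sub>R a \<in> C" "z + (\<epsilon> * t) *\<^sub>R b \<in> C"
    using \<epsilon> t a b assms by (intro convex_cone_add [OF assms(1)] convex_cone_scaleR [OF assms(1)]; simp)+
  ultimately have "a \<in> face_dirs C z" "b \<in> face_dirs C z"
    using \<epsilon>(1) t unfolding face_dirs_def
    by (intro CollectI exI [of _ "\<epsilon> * (1 - t)"] exI [of _ "\<epsilon> * t"]; simp)+
  with a b show "a \<in> C \<inter> face_dirs C z" "b \<in> C \<inter> face_dirs C z" by auto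
qed auto

lemma rel_interior_face_dirs:
  fixes C :: "'a::euclidean_space set"
  assumes "convex_cone C" and "z \<in> C"
  shows "z \<in> rel_interior (C \<inter> face_dirs C z)"
proof -
  have cvx: "convex C" using assms(1) by (simp add: convex_cone_def)
  have sub: "subspace (face_dirs C z)" by (rule subspace_face_dirs [OF cvx assms(2)])
  have zG: "z \<in> C \<inter> face_dirs C z" using assms self_in_face_dirs by blast
  have "\<exists>\<mu>>1. (1 - \<mu>) *\<^sub>R x + \<mu> *\<^sub>R z \<in> C \<inter> face_dirs C z" if x: "x \<in> C \<inter> face_dirs C z" for x
  proof -
    obtain \<epsilon> where \<epsilon>: "\<epsilon> > 0" "\<And>t. \<bar>t\<bar> \<le> \<epsilon> \<Longrightarrow> z + t *\<^sub>R x \<in> C"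
      using face_dirsE [OF cvx] x by blast
    define \<delta> where "\<delta> = min \<epsilon> (1/2)"
    define \<mu> where "\<mu> = 1 / (1 - \<delta>)"
    have \<delta>: "0 < \<delta>" "\<delta> \<le> \<epsilon>" "\<delta> < 1" using \<epsilon>(1) by (auto simp: \<delta>_def)
    then have "\<mu> > 1" by (simp add: \<mu>_def)
    have "1 - \<mu> = \<mu> * (- \<delta>)" using \<delta> by (simp add: \<mu>_def field_simps)
    then have eq: "(1 - \<mu>) *\<^sub>R x + \<mu> *\<^sub>R z = \<mu> *\<^sub>R (z + (- \<delta>) *\<^sub>R x)"
      by (simp only:) (simp add: algebra_simps)
    have "\<mu> *\<^sub>R (z + (- \<delta>) *\<^sub>R x) \<in> C"
      using \<open>\<mu> > 1\<close> \<epsilon>(2) [of "- \<delta>"] \<delta> assms(1) by (intro convex_cone_scaleR) auto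
    moreover have "\<mu> *\<^sub>R (z + (- \<delta>) *\<^sub>R x) \<in> face_dirs C z"
      using zG x by (intro subspace_scale [OF sub] subspace_add [OF sub] subspace_scale [OF sub]) auto
    ultimately show ?thesis using \<open>\<mu> > 1\<close> eq by auto
  qed
  moreover have "convex (C \<inter> face_dirs C z)"
    using convex_Int [OF cvx subspace_imp_convex [OF sub]] .
  ultimately show ?thesis
    using zG by (subst convex_rel_interior_iff) auto
qed

lemma span_face_dirs:
  fixes C :: "'a::euclidean_space set"
  assumes "convex_cone C" and "z \<in> C"
  shows "span (C \<inter> face_dirs C z) = face_dirs C z"
proof
  have sub: "subspace (face_dirs C z)"
    using assms by (intro subspace_face_dirs) (auto simp: convex_cone_def)
  show "span (C \<inter> face_dirs C z) \<subseteq> face_dirs C z"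
    by (rule span_minimal) (auto simp: sub)
  show "face_dirs C z \<subseteq> span (C \<inter> face_dirs C z)"
  proof
    fix d assume d: "d \<in> face_dirs C z"
    then obtain \<epsilon> where \<epsilon>: "\<epsilon> > 0" "z + \<epsilon> *\<^sub>R d \<in> C" "z - \<epsilon> *\<^sub>R d \<in> C"
      by (auto simp: face_dirs_def)
    have "z + \<epsilon> *\<^sub>R d \<in> face_dirs C z" "z - \<epsilon> *\<^sub>R d \<in> face_dirs C z"
      using d self_in_face_dirs [OF assms] sub by (auto intro!: subspace_add subspace_diff subspace_scale)
    with \<epsilon> have "(1 / (2 * \<epsilon>)) *\<^sub>R ((z + \<epsilon> *\<^sub>R d) - (z - \<epsilon> *\<^sub>R d)) \<in> span (C \<inter> face_dirs C z)"
      by (intro span_scale span_diff span_base) auto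
    moreover have "(1 / (2 * \<epsilon>)) *\<^sub>R ((z + \<epsilon> *\<^sub>R d) - (z - \<epsilon> *\<^sub>R d)) = d"
      using \<epsilon>(1) by (simp add: algebra_simps flip: scaleR_add_left)
    ultimately show "d \<in> span (C \<inter> face_dirs C z)" by simp
  qed
qed

lemma the_face_rel_interior_eq:
  fixes C :: "'a::euclidean_space set"
  assumes "convex_cone C" and "z \<in> C"
  shows "(THE F. F face_of C \<and> z \<in> rel_interior F) = C \<inter> face_dirs C z"
proof (rule the_equality)
  show "C \<inter> face_dirs C z face_of C \<and> z \<in> rel_interior (C \<inter> face_dirs C z)"
    using face_of_face_dirs rel_interior_face_dirs assms by blast
  show "F = C \<inter> face_dirs C z" if "F face_of C \<and> z \<in> rel_interior F" for F
    using that face_of_eq [of F C "C \<inter> face_dirs C z"] face_of_face_dirs rel_interior_face_dirs assms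
    by blast
qed

lemma diff_in_face_dirs_add:
  assumes "convex_cone C" and "u \<in> C" and "v \<in> C"
  shows "u - v \<in> face_dirs C (u + v)"
proof -
  have "(u + v) + 1 *\<^sub>R (u - v) = 2 *\<^sub>R u" "(u + v) - 1 *\<^sub>R (u - v) = 2 *\<^sub>R v"
    by (simp_all add: algebra_simps scaleR_2)
  then show ?thesis
    unfolding face_dirs_def using assms by (auto intro!: exI [of _ 1] convex_cone_scaleR)
qed

lemma independent_pair_half_add_diff:
  fixes d z :: "'a::real_vector"
  assumes "d \<noteq> z \<and> independent {d, z}" and "\<epsilon> \<noteq> 0"
  shows "(1/2) *\<^sub>R (z + \<epsilon> *\<^sub>R d) \<noteq> (1/2) *\<^sub>R (z - \<epsilon> *\<^sub>R d) \<and>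
    independent {(1/2) *\<^sub>R (z + \<epsilon> *\<^sub>R d), (1/2) *\<^sub>R (z - \<epsilon> *\<^sub>R d)}"
  unfolding independent_pair_iff
proof (intro allI impI)
  fix a b assume ab: "a *\<^sub>R (1/2) *\<^sub>R (z + \<epsilon> *\<^sub>R d) + b *\<^sub>R (1/2) *\<^sub>R (z - \<epsilon> *\<^sub>R d) = 0"
  have "a *\<^sub>R (1/2) *\<^sub>R (z + \<epsilon> *\<^sub>R d) + b *\<^sub>R (1/2) *\<^sub>R (z - \<epsilon> *\<^sub>R d) =
        ((a - b) * \<epsilon> / 2) *\<^sub>R d + ((a + b) / 2) *\<^sub>R z"
    by (simp add: scaleR_add_right scaleR_diff_right scaleR_add_left scaleR_diff_left
        diff_divide_distrib add_divide_distrib algebra_simps)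
  then have "((a - b) * \<epsilon> / 2) *\<^sub>R d + ((a + b) / 2) *\<^sub>R z = 0"
    using ab by simp
  then have "(a - b) * \<epsilon> / 2 = 0 \<and> (a + b) / 2 = 0"
    using assms(1) by (simp only: independent_pair_iff)
  then show "a = 0 \<and> b = 0"
    using assms(2) by auto
qed

lemma face_dirs_subset_span_iff:
  fixes C :: "'a::euclidean_space set"
  assumes "convex_cone C" and "z \<in> C" and "z \<noteq> 0"
  shows "face_dirs C z \<subseteq> span {z} \<longleftrightarrow>
    \<not> (\<exists>u v. u \<in> C \<and> v \<in> C \<and> u \<noteq> v \<and> independent {u, v} \<and> z = u + v)"
proof
  assume dirs: "face_dirs C z \<subseteq> span {z}"
  show "\<not> (\<exists>u v. u \<in> C \<and> v \<in> C \<and> u \<noteq> v \<and> independent {u, v} \<and> z = u + v)"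
  proof (intro notI, elim exE conjE)
    fix u v assume uv: "u \<in> C" "v \<in> C" "u \<noteq> v" "independent {u, v}" "z = u + v"
    have "u - v \<in> span {z}"
      using dirs diff_in_face_dirs_add [OF assms(1) uv(1,2)] uv(5) by blast
    then obtain c where "u - v = c *\<^sub>R (u + v)"
      using uv(5) by (auto simp: span_singleton)
    then have "(1 - c) *\<^sub>R u + (- (1 + c)) *\<^sub>R v = 0"
      by (simp add: algebra_simps)
    then have "1 - c = 0 \<and> - (1 + c) = 0"
      using uv(3,4) independent_pair_iff by blast
    then show False by linarith
  qed
next
  assume indec: "\<not> (\<exists>u v. u \<in> C \<and> v \<in> C \<and> u \<noteq> v \<and> independent {u, v} \<and> z = u + v)"
  show "face_dirs C z \<subseteq> span {z}"
  proof (rule subsetI, rule ccontr)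
    fix d assume d: "d \<in> face_dirs C z" and "d \<notin> span {z}"
    then have indep: "d \<noteq> z \<and> independent {d, z}"
      using assms(3) span_base [of z "{z}"] by (auto simp: independent_insert)
    obtain \<epsilon> where \<epsilon>: "\<epsilon> > 0" "z + \<epsilon> *\<^sub>R d \<in> C" "z - \<epsilon> *\<^sub>R d \<in> C"
      using d by (auto simp: face_dirs_def)
    define u v where "u = (1/2) *\<^sub>R (z + \<epsilon> *\<^sub>R d)" and "v = (1/2) *\<^sub>R (z - \<epsilon> *\<^sub>R d)"
    have "u \<in> C" "v \<in> C"
      using \<epsilon> assms(1) by (auto simp: u_def v_def intro: convex_cone_scaleR)
    moreover have "z = u + v"
      by (simp add: u_def v_def algebra_simps flip: scaleR_add_left)
    moreover have "u \<noteq> v \<and> independent {u, v}"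
      unfolding u_def v_def using independent_pair_half_add_diff [OF indep, of \<epsilon>] \<epsilon>(1) by simp
    ultimately show False
      using indec by blast
  qed
qed

lemma convex_cone_normal_cone: "convex_cone (normal_cone K x)"
  unfolding convex_cone_iff normal_cone_def
  by (auto simp: inner_add_left mult_nonneg_nonpos intro: add_nonpos_nonpos)

lemma mem_supp_set_iff:
  assumes "convex_body K"
  shows "x \<in> supp_set K z \<longleftrightarrow> x \<in> K \<and> z \<in> normal_cone K x"
proof -
  have "bdd_above ((\<lambda>y. y \<bullet> z) ` K)"
    using assms unfolding convex_body_def
    by (intro bounded_imp_bdd_above compact_imp_bounded compact_continuous_image continuous_intros) auto
  then have "x \<in> supp_set K z \<longleftrightarrow> x \<in> K \<and> (\<forall>y\<in>K. y \<bullet> z \<le> x \<bullet> z)"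
    unfolding supp_set_def supp_fun_def
    by (auto intro: cSUP_upper cSup_eq_maximum [symmetric])
  then show ?thesis
    by (auto simp: normal_cone_def inner_diff_right inner_commute)
qed

lemma supp_set_nonempty:
  assumes "convex_body K"
  shows "supp_set K z \<noteq> {}"
proof -
  have "compact ((\<lambda>y. y \<bullet> z) ` K)" "(\<lambda>y. y \<bullet> z) ` K \<noteq> {}"
    using assms unfolding convex_body_def by (auto intro!: compact_continuous_image continuous_intros)
  then obtain s where "s \<in> (\<lambda>y. y \<bullet> z) ` K" "\<forall>t\<in>(\<lambda>y. y \<bullet> z) ` K. t \<le> s"
    by (meson compact_attains_sup)
  then obtain x where "x \<in> K" "\<forall>y\<in>K. y \<bullet> z \<le> x \<bullet> z"
    by auto
  then have "x \<in> K \<and> z \<in> normal_cone K x"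
    by (auto simp: normal_cone_def inner_diff_right inner_commute)
  then show ?thesis using mem_supp_set_iff [OF assms] by blast
qed

lemma convex_supp_set:
  assumes "convex_body K"
  shows "convex (supp_set K z)"
proof -
  have "supp_set K z = K \<inter> {x. z \<bullet> x = supp_fun K z}"
    by (auto simp: supp_set_def inner_commute)
  then show ?thesis
    using assms by (auto simp: convex_body_def intro!: convex_Int convex_hyperplane)
qed

lemma face_dirs_normal_cone_subset:
  assumes "x \<in> supp_set K z" and "x' \<in> supp_set K z"
  shows "face_dirs (normal_cone K x) z \<subseteq> face_dirs (normal_cone K x') z"
proof
  fix d assume "d \<in> face_dirs (normal_cone K x) z"
  then obtain \<epsilon> where \<epsilon>: "\<epsilon> > 0" "z + \<epsilon> *\<^sub>R d \<in> normal_cone K x" "z - \<epsilon> *\<^sub>R d \<in> normal_cone K x"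
    by (auto simp: face_dirs_def)
  have "x' \<in> K" and z: "z \<bullet> (x' - x) = 0"
    using assms by (auto simp: supp_set_def inner_diff_right inner_commute)
  then have "(z + \<epsilon> *\<^sub>R d) \<bullet> (x' - x) \<le> 0" "(z - \<epsilon> *\<^sub>R d) \<bullet> (x' - x) \<le> 0"
    using \<epsilon> by (auto simp: normal_cone_def)
  with z \<epsilon>(1) have "d \<bullet> (x' - x) = 0"
    by (simp add: inner_add_left inner_diff_left)
  \<comment> \<open>normals orthogonal to \<open>x' - x\<close> are normal at \<open>x\<close> iff they are normal at \<open>x'\<close>\<close>
  then have "\<forall>y\<in>K. w \<bullet> (y - x') = w \<bullet> (y - x)" if "w = z + \<epsilon> *\<^sub>R d \<or> w = z - \<epsilon> *\<^sub>R d" for w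
    using that z by (auto simp: inner_diff_right inner_add_left inner_diff_left algebra_simps)
  then have "z + \<epsilon> *\<^sub>R d \<in> normal_cone K x'" "z - \<epsilon> *\<^sub>R d \<in> normal_cone K x'"
    using \<epsilon> by (auto simp: normal_cone_def)
  with \<epsilon>(1) show "d \<in> face_dirs (normal_cone K x') z"
    by (auto simp: face_dirs_def)
qed

lemma face_dirs_normal_cone_eq:
  assumes "x \<in> supp_set K z" and "x' \<in> supp_set K z"
  shows "face_dirs (normal_cone K x) z = face_dirs (normal_cone K x') z"
  using face_dirs_normal_cone_subset assms by blast

lemma span_touching_cone:
  assumes "convex_body K" and "x \<in> supp_set K z"
  shows "span (touching_cone K z) = face_dirs (normal_cone K x) z"
proof -
  define x\<^sub>0 where "x\<^sub>0 = (SOME x. x \<in> rel_interior (supp_set K z))"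
  have "rel_interior (supp_set K z) \<noteq> {}"
    using assms(1) supp_set_nonempty rel_interior_eq_empty convex_supp_set by blast
  then have "x\<^sub>0 \<in> rel_interior (supp_set K z)"
    unfolding x\<^sub>0_def by (simp add: some_in_eq)
  then have "x\<^sub>0 \<in> supp_set K z"
    using rel_interior_subset by blast
  then have z: "z \<in> normal_cone K x\<^sub>0"
    using mem_supp_set_iff [OF assms(1)] by blast
  have "touching_cone K z = normal_cone K x\<^sub>0 \<inter> face_dirs (normal_cone K x\<^sub>0) z"
    unfolding touching_cone_def normal_cone_face_def x\<^sub>0_def [symmetric]
    by (rule the_face_rel_interior_eq [OF convex_cone_normal_cone z])
  then have "span (touching_cone K z) = face_dirs (normal_cone K x\<^sub>0) z"
    using span_face_dirs [OF convex_cone_normal_cone z] by simp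
  also have "\<dots> = face_dirs (normal_cone K x) z"
    using face_dirs_normal_cone_eq \<open>x\<^sub>0 \<in> supp_set K z\<close> assms(2) by blast
  finally show ?thesis .
qed

abbreviation flat_ball :: "'a::euclidean_space \<Rightarrow> 'a set" where
  "flat_ball e \<equiv> cball 0 1 \<inter> {x. x \<bullet> e = 0}"

lemma convex_body_flat_ball: "convex_body (flat_ball e)"
  unfolding convex_body_def
proof (intro conjI)
  have "0 \<in> flat_ball e" by simp
  then show "flat_ball e \<noteq> {}" by blast
  have "closed {x. x \<bullet> e = 0}" "convex {x. x \<bullet> e = 0}"
    using closed_hyperplane [of e 0] convex_hyperplane [of e 0] by (simp_all add: inner_commute)
  then show "compact (flat_ball e)" "convex (flat_ball e)"
    by (auto intro: compact_Int_closed convex_Int)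
qed

lemma normal_cone_flat_ball_orthogonal_part:
  fixes e p u q :: "'a::euclidean_space"
  assumes p: "p \<in> flat_ball e" and u: "u \<in> normal_cone (flat_ball e) p"
    and q: "q \<bullet> e = 0" "q \<bullet> p = 0" "u \<bullet> q = q \<bullet> q"
  shows "q = 0"
proof (rule ccontr)
  assume "q \<noteq> 0"
  then have qq: "q \<bullet> q > 0" by simp
  have pe: "p \<bullet> e = 0" and pp: "p \<bullet> p \<le> 1"
    using p norm_le_square [of p 1] by auto
  \<comment> \<open>move from \<open>p\<close> towards \<open>q\<close>, pulling back along \<open>p\<close> just enough to stay in the ball\<close>
  define t where "t = 1 / (norm q + \<bar>u \<bullet> p\<bar> + 1)"
  define a where "a = t\<^sup>2 * (q \<bullet> q)"
  define y where "y = (1 - a) *\<^sub>R p + t *\<^sub>R q"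
  have den: "norm q + \<bar>u \<bullet> p\<bar> + 1 > 0"
    by (smt (verit) norm_ge_zero abs_ge_zero)
  have t: "t > 0" "t * norm q \<le> 1" "t * (u \<bullet> p) < 1"
    using den by (simp_all add: t_def field_simps)
      (use abs_ge_self [of "u \<bullet> p"] norm_ge_zero [of q] in linarith)
  have "a = (t * norm q)\<^sup>2"
    by (simp add: a_def power_mult_distrib power2_norm_eq_inner)
  then have a: "0 \<le> a" "a \<le> 1"
    using t by (auto simp: abs_square_le_1)
  have "y \<bullet> y = (1 - a)\<^sup>2 * (p \<bullet> p) + a"
    using q(2) by (simp add: y_def a_def inner_add_left inner_add_right inner_commute power2_eq_square algebra_simps)
  also have "\<dots> \<le> (1 - a)\<^sup>2 + a"
    using pp by (simp add: mult_left_le)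
  also have "\<dots> \<le> 1"
    using a by (simp add: power2_eq_square algebra_simps mult_left_le)
  finally have "norm y \<le> 1"
    by (simp add: norm_le_square)
  moreover have "y \<bullet> e = 0"
    by (simp add: y_def inner_add_left pe q(1))
  ultimately have y: "y \<in> flat_ball e"
    by simp
  have "u \<bullet> (y - p) = t * (q \<bullet> q) * (1 - t * (u \<bullet> p))"
    using q(3) by (simp add: y_def a_def inner_diff_right inner_add_right power2_eq_square algebra_simps)
  also have "\<dots> > 0"
    using t qq by simp
  finally show False
    using u y by (auto simp: normal_cone_def not_le [symmetric])
qed

lemma normal_cone_flat_ball_subset:
  fixes e p :: "'a::euclidean_space"
  assumes e: "norm e = 1" and p: "p \<in> flat_ball e"
  shows "normal_cone (flat_ball e) p \<subseteq> span {e, p}"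
proof
  fix u assume u: "u \<in> normal_cone (flat_ball e) p"
  define c where "c = (u \<bullet> p) / (p \<bullet> p)"
  define q where "q = u - (u \<bullet> e) *\<^sub>R e - c *\<^sub>R p"
  have ee: "e \<bullet> e = 1" and pe: "p \<bullet> e = 0" "e \<bullet> p = 0"
    using e p by (auto simp: norm_eq_1 inner_commute)
  have qe: "q \<bullet> e = 0" "e \<bullet> q = 0"
    by (simp_all add: q_def inner_diff_left inner_diff_right ee pe inner_commute)
  have qp: "q \<bullet> p = 0" "p \<bullet> q = 0"
    by (cases "p = 0"; simp add: q_def c_def inner_diff_left inner_diff_right pe inner_commute)+
  have "u = q + (u \<bullet> e) *\<^sub>R e + c *\<^sub>R p" by (simp add: q_def)
  then have "u \<bullet> q = q \<bullet> q"
    by (metis inner_add_left inner_scaleR_left qe(2) qp(2) add.right_neutral mult_zero_right)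
  then have "q = 0"
    using normal_cone_flat_ball_orthogonal_part [OF p u qe(1) qp(1)] by blast
  then have "u = (u \<bullet> e) *\<^sub>R e + c *\<^sub>R p"
    by (simp add: q_def algebra_simps)
  then show "u \<in> span {e, p}"
    by (metis span_add span_base span_scale insertI1 insertI2 singletonI)
qed

lemma flat_ball_support_point:
  fixes e z :: "'a::euclidean_space"
  assumes e: "norm e = 1"
  obtains p where "p \<in> supp_set (flat_ball e) z" and "p \<in> span {e, z}"
proof -
  define z\<^sub>L where "z\<^sub>L = z - (z \<bullet> e) *\<^sub>R e"
  \<comment> \<open>\<open>p = 0\<close> when \<open>z\<close> is parallel to \<open>e\<close>, since \<open>1 / 0 = 0\<close>\<close>
  define p where "p = (1 / norm z\<^sub>L) *\<^sub>R z\<^sub>L"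
  have "e \<bullet> e = 1" using e by (simp add: norm_eq_1)
  then have pe: "p \<bullet> e = 0"
    by (simp add: p_def z\<^sub>L_def inner_diff_left)
  have np: "norm p = 1 \<or> p = 0"
    by (auto simp: p_def)
  then have "p \<in> flat_ball e" using pe by auto
  have "(z \<bullet> e) *\<^sub>R e \<in> normal_cone (flat_ball e) p"
    using pe by (auto simp: normal_cone_def inner_diff_right inner_commute)
  moreover have "p \<bullet> y \<le> p \<bullet> p" if "y \<in> flat_ball e" for y
    using np norm_cauchy_schwarz [of p y] that by (auto simp: dot_square_norm)
  then have "p \<in> normal_cone (flat_ball e) p"
    by (auto simp: normal_cone_def inner_diff_right)
  ultimately have "(z \<bullet> e) *\<^sub>R e + norm z\<^sub>L *\<^sub>R p \<in> normal_cone (flat_ball e) p"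
    using convex_cone_normal_cone by (auto intro!: convex_cone_add convex_cone_scaleR)
  moreover have "z = (z \<bullet> e) *\<^sub>R e + norm z\<^sub>L *\<^sub>R p"
    by (cases "z\<^sub>L = 0") (auto simp: p_def z\<^sub>L_def)
  ultimately have "p \<in> supp_set (flat_ball e) z"
    using mem_supp_set_iff [OF convex_body_flat_ball [of e]] \<open>p \<in> flat_ball e\<close> by simp
  moreover have "p \<in> span {e, z}"
    unfolding p_def z\<^sub>L_def by (intro span_scale span_diff span_base) auto
  ultimately show ?thesis using that by blast
qed

lemma span_touching_cone_flat_ball:
  fixes e z :: "'a::euclidean_space"
  assumes e: "norm e = 1"
  shows "span (touching_cone (flat_ball e) z) = span {e, z}"
proof -
  obtain p where p: "p \<in> supp_set (flat_ball e) z" and p_span: "p \<in> span {e, z}"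
    using flat_ball_support_point [OF e] by blast
  have pB: "p \<in> flat_ball e" and zN: "z \<in> normal_cone (flat_ball e) p"
    using p mem_supp_set_iff [OF convex_body_flat_ball [of e]] by blast+
  have "face_dirs (normal_cone (flat_ball e) p) z \<subseteq> span {e, z}"
  proof
    fix d assume "d \<in> face_dirs (normal_cone (flat_ball e) p) z"
    then obtain \<epsilon> where \<epsilon>: "\<epsilon> > 0" "z + \<epsilon> *\<^sub>R d \<in> normal_cone (flat_ball e) p"
      by (auto simp: face_dirs_def)
    have "span {e, p} \<subseteq> span {e, z}"
      using p_span by (intro span_minimal) (auto intro: span_base)
    then have "z + \<epsilon> *\<^sub>R d \<in> span {e, z}"
      using normal_cone_flat_ball_subset [OF e pB] \<epsilon>(2) by blast
    then have "(1 / \<epsilon>) *\<^sub>R ((z + \<epsilon> *\<^sub>R d) - z) \<in> span {e, z}"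
      by (intro span_scale span_diff) (auto intro: span_base)
    then show "d \<in> span {e, z}" using \<epsilon>(1) by simp
  qed
  moreover have "span {e, z} \<subseteq> face_dirs (normal_cone (flat_ball e) p) z"
  proof (rule span_minimal)
    have "c *\<^sub>R e \<in> normal_cone (flat_ball e) p" for c
      using pB by (auto simp: normal_cone_def inner_diff_right inner_commute)
    then have "z + 1 *\<^sub>R e \<in> normal_cone (flat_ball e) p" "z - 1 *\<^sub>R e \<in> normal_cone (flat_ball e) p"
      using convex_cone_add [OF convex_cone_normal_cone zN] by (metis scaleR_minus_left diff_conv_add_uminus)+
    then have "e \<in> face_dirs (normal_cone (flat_ball e) p) z"
      unfolding face_dirs_def by (intro CollectI exI [of _ 1]) simp
    then show "{e, z} \<subseteq> face_dirs (normal_cone (flat_ball e) p) z"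
      using self_in_face_dirs [OF convex_cone_normal_cone zN] by simp
    show "subspace (face_dirs (normal_cone (flat_ball e) p) z)"
      using zN convex_cone_normal_cone [of "flat_ball e" p] by (intro subspace_face_dirs) (simp_all add: convex_cone_def)
  qed
  ultimately show ?thesis
    using span_touching_cone [OF convex_body_flat_ball p] by simp
qed

lemma proj_onto_subspace:
  fixes E :: "'a::euclidean_space set"
  assumes "subspace E"
  shows "proj_onto E x \<in> E" and "u \<in> E \<Longrightarrow> u \<bullet> proj_onto E x = u \<bullet> x"
proof -
  obtain y w where y: "y \<in> E" and w: "\<And>u. u \<in> E \<Longrightarrow> orthogonal w u" and x: "x = y + w"
    using orthogonal_subspace_decomp_exists [of E x] span_eq_iff [of E] assms by metis
  have char: "y \<in> E \<and> (\<forall>u\<in>E. (x - y) \<bullet> u = 0)"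
    using y w x by (simp add: orthogonal_def)
  have "proj_onto E x = y"
    unfolding proj_onto_def
  proof (rule the_equality)
    fix y' assume y': "y' \<in> E \<and> (\<forall>u\<in>E. (x - y') \<bullet> u = 0)"
    then have "y - y' \<in> E" using y assms by (simp add: subspace_diff)
    then have "(x - y') \<bullet> (y - y') = 0" "(x - y) \<bullet> (y - y') = 0" using char y' by auto
    then have "(y - y') \<bullet> (y - y') = 0"
      by (simp add: inner_diff_left inner_diff_right inner_commute)
    then show "y' = y" by simp
  qed (rule char)
  with char show "proj_onto E x \<in> E" by simp
  assume "u \<in> E"
  with char \<open>proj_onto E x = y\<close> have "(x - proj_onto E x) \<bullet> u = 0" by simp
  then show "u \<bullet> proj_onto E x = u \<bullet> x"
    by (simp add: inner_diff_right inner_commute)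
qed

lemma normal_cone_proj_onto_iff:
  assumes "subspace E" and "u \<in> E"
  shows "u \<in> normal_cone (proj_onto E ` K) (proj_onto E x) \<longleftrightarrow> u \<in> normal_cone K x"
  using proj_onto_subspace (2) [OF assms] by (simp add: normal_cone_def inner_diff_right)

lemma normal_cone_nonzero_imp_not_interior:
  fixes E :: "'a::euclidean_space set"
  assumes "subspace E" and "x \<in> E" and "z \<in> E" and "z \<noteq> 0" and "z \<in> normal_cone M x"
  shows "\<not> (\<exists>\<epsilon>>0. ball x \<epsilon> \<inter> E \<subseteq> M)"
proof
  assume "\<exists>\<epsilon>>0. ball x \<epsilon> \<inter> E \<subseteq> M"
  then obtain \<epsilon> where \<epsilon>: "\<epsilon> > 0" "ball x \<epsilon> \<inter> E \<subseteq> M" by blast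
  define w where "w = x + (\<epsilon> / (2 * norm z)) *\<^sub>R z"
  have "w \<in> ball x \<epsilon> \<inter> E"
    using \<epsilon>(1) assms by (auto simp: w_def dist_norm intro: subspace_add subspace_scale)
  then have "z \<bullet> (w - x) \<le> 0" using \<epsilon>(2) assms(5) by (auto simp: normal_cone_def)
  moreover have "z \<bullet> (w - x) = \<epsilon> * norm z / 2"
    using assms(4) by (simp add: w_def power2_norm_eq_inner [symmetric] power2_eq_square)
  moreover have "\<epsilon> * norm z / 2 > 0"
    using \<epsilon>(1) assms(4) by simp
  ultimately show False by linarith
qed

lemma convex_cone_Int_subspace:
  assumes "convex_cone C" and "subspace E"
  shows "convex_cone (C \<inter> E)"
  using assms by (auto simp: convex_cone_iff subspace_def)

lemma indecomposable_proj_iff_face_dirs: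
  fixes K E :: "'a::euclidean_space set"
  assumes "subspace E" and "z \<in> E" and "z \<noteq> 0" and "z \<in> normal_cone K x"
  shows "\<not> (\<exists>u v. u \<in> normal_cone (proj_onto E ` K) (proj_onto E x) \<inter> E \<and>
                  v \<in> normal_cone (proj_onto E ` K) (proj_onto E x) \<inter> E \<and>
                  u \<noteq> v \<and> independent {u, v} \<and> z = u + v)
    \<longleftrightarrow> face_dirs (normal_cone K x) z \<inter> E \<subseteq> span {z}"
proof -
  have "normal_cone (proj_onto E ` K) (proj_onto E x) \<inter> E = normal_cone K x \<inter> E"
    using normal_cone_proj_onto_iff [OF assms(1)] by blast
  moreover have "convex_cone (normal_cone K x \<inter> E)"
    by (rule convex_cone_Int_subspace [OF convex_cone_normal_cone assms(1)])
  ultimately show ?thesis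
    using face_dirs_subset_span_iff [of "normal_cone K x \<inter> E" z] face_dirs_Int_subspace [OF assms(1,2)] assms
    by simp
qed

lemma mem_ext_rel_proj_iff:
  fixes K E :: "'a::euclidean_space set"
  assumes K: "convex_body K" and E: "subspace E" and z: "norm z = 1" and x\<^sub>0: "x\<^sub>0 \<in> supp_set K z"
  shows "z \<in> ext_rel E (proj_onto E ` K) \<longleftrightarrow> z \<in> E \<and> face_dirs (normal_cone K x\<^sub>0) z \<inter> E \<subseteq> span {z}"
proof
  assume "z \<in> ext_rel E (proj_onto E ` K)"
  then obtain x where zE: "z \<in> E" and x: "x \<in> K" and zN: "z \<in> normal_cone (proj_onto E ` K) (proj_onto E x)"
    and indec: "\<not> (\<exists>u v. u \<in> normal_cone (proj_onto E ` K) (proj_onto E x) \<inter> E \<and>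
                  v \<in> normal_cone (proj_onto E ` K) (proj_onto E x) \<inter> E \<and>
                  u \<noteq> v \<and> independent {u, v} \<and> z = u + v)"
    unfolding ext_rel_def by blast
  have z0: "z \<noteq> 0" using z by auto
  have zNx: "z \<in> normal_cone K x"
    using zN normal_cone_proj_onto_iff [OF E zE] by blast
  then have "x \<in> supp_set K z"
    using mem_supp_set_iff [OF K] x by blast
  moreover have "face_dirs (normal_cone K x) z \<inter> E \<subseteq> span {z}"
    using indec indecomposable_proj_iff_face_dirs [OF E zE z0 zNx] by blast
  ultimately show "z \<in> E \<and> face_dirs (normal_cone K x\<^sub>0) z \<inter> E \<subseteq> span {z}"
    using face_dirs_normal_cone_eq [OF x\<^sub>0] zE by simp
next
  assume "z \<in> E \<and> face_dirs (normal_cone K x\<^sub>0) z \<inter> E \<subseteq> span {z}"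
  then have zE: "z \<in> E" and dirs: "face_dirs (normal_cone K x\<^sub>0) z \<inter> E \<subseteq> span {z}"
    by auto
  have z0: "z \<noteq> 0" using z by auto
  have "x\<^sub>0 \<in> K" and zN: "z \<in> normal_cone K x\<^sub>0"
    using mem_supp_set_iff [OF K] x\<^sub>0 by auto
  moreover have "z \<in> normal_cone (proj_onto E ` K) (proj_onto E x\<^sub>0)"
    using normal_cone_proj_onto_iff [OF E zE] zN by blast
  moreover have "\<not> (\<exists>\<epsilon>>0. ball (proj_onto E x\<^sub>0) \<epsilon> \<inter> E \<subseteq> proj_onto E ` K)"
    using normal_cone_nonzero_imp_not_interior [OF E proj_onto_subspace(1) [OF E] zE z0] calculation(3) .
  ultimately show "z \<in> ext_rel E (proj_onto E ` K)"
    using indecomposable_proj_iff_face_dirs [OF E zE z0 zN] dirs zE z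
    unfolding ext_rel_def by blast
qed

lemma orthogonal_comp_span: "(span X)\<^sup>\<bottom> = X\<^sup>\<bottom>"
proof
  show "(span X)\<^sup>\<bottom> \<subseteq> X\<^sup>\<bottom>" by (rule orthogonal_comp_anti_mono [OF span_superset])
  show "X\<^sup>\<bottom> \<subseteq> (span X)\<^sup>\<bottom>"
  proof
    fix x assume "x \<in> X\<^sup>\<bottom>"
    then have "X \<subseteq> {y. x \<bullet> y = 0}"
      by (auto simp: orthogonal_comp_def orthogonal_def inner_commute)
    then have "span X \<subseteq> {y. x \<bullet> y = 0}"
      by (rule span_minimal) (rule subspace_hyperplane)
    then show "x \<in> (span X)\<^sup>\<bottom>"
      by (auto simp: orthogonal_comp_def orthogonal_def inner_commute)
  qed
qed

lemma orthogonal_comp_Un: "(A \<union> B)\<^sup>\<bottom> = A\<^sup>\<bottom> \<inter> B\<^sup>\<bottom>"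
  by (auto simp: orthogonal_comp_def)

lemma dim_orthogonal_comp:
  fixes X :: "'a::euclidean_space set"
  shows "dim (X\<^sup>\<bottom>) = DIM('a) - dim X"
proof -
  have "dim {x + y |x y. x \<in> span X \<and> y \<in> (span X)\<^sup>\<bottom>} + dim (span X \<inter> (span X)\<^sup>\<bottom>) =
        dim (span X) + dim ((span X)\<^sup>\<bottom>)"
    by (rule dim_sums_Int [OF subspace_span subspace_orthogonal_comp])
  moreover have "{x + y |x y. x \<in> span X \<and> y \<in> (span X)\<^sup>\<bottom>} = UNIV"
    using subspace_sum_orthogonal_comp [OF subspace_span, of X] unfolding set_plus_def by blast
  moreover have "span X \<inter> (span X)\<^sup>\<bottom> = {0}"
    by (rule orthogonal_Int_0 [OF subspace_span])
  ultimately show ?thesis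
    by (simp add: orthogonal_comp_span)
qed

lemma Inter_hyperplanes_eq_orthogonal_comp: "(\<Inter>i\<in>I. {x. a i \<bullet> x = 0}) = (a ` I)\<^sup>\<bottom>"
  by (auto simp: orthogonal_comp_def orthogonal_def)

lemma independent_if_dim_eq_card:
  fixes a :: "'i \<Rightarrow> 'a::euclidean_space"
  assumes "finite I" and "dim (a ` I) = card I"
  shows "independent (a ` I)" and "inj_on a I"
proof -
  have "card I \<le> card (a ` I)"
    using assms dim_le_card [OF span_superset] by (metis finite_imageI)
  then show inj: "inj_on a I"
    using assms(1) card_image_le [of I a] by (simp add: eq_card_imp_inj_on)
  then show "independent (a ` I)"
    using card_eq_dim [of "a ` I" "a ` I"] assms by (simp add: card_image span_superset)
qed

lemma lin_hyperplane_iff: "lin_hyperplane H \<longleftrightarrow> (\<exists>a. a \<noteq> 0 \<and> H = {x. a \<bullet> x = 0})"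
proof
  assume H: "lin_hyperplane H"
  then obtain a where "a \<noteq> 0" "span H = {x. a \<bullet> x = 0}"
    using lowdim_eq_hyperplane unfolding lin_hyperplane_def by metis
  with H show "\<exists>a. a \<noteq> 0 \<and> H = {x. a \<bullet> x = 0}"
    by (metis lin_hyperplane_def span_eq_iff)
qed (auto simp: lin_hyperplane_def subspace_hyperplane dim_hyperplane)

definition hyperplanes_meet_in_line :: "(nat \<Rightarrow> 'a::euclidean_space set) \<Rightarrow> bool" where
  "hyperplanes_meet_in_line Ts \<longleftrightarrow>
     (\<exists>Hs. (\<forall>i < DIM('a) - 1. lin_hyperplane (Hs i) \<and> Ts i \<subseteq> Hs i) \<and>
           dim (\<Inter>i\<in>{..<DIM('a) - 1}. Hs i) = 1)"

lemma ext_mixed_eq: "ext_mixed Ks = {z. norm z = 1 \<and> hyperplanes_meet_in_line (\<lambda>i. touching_cone (Ks i) z)}"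
  by (simp add: ext_mixed_def hyperplanes_meet_in_line_def)

lemma hyperplanes_meet_in_line_span:
  "hyperplanes_meet_in_line (\<lambda>i. span (Ts i)) \<longleftrightarrow> hyperplanes_meet_in_line Ts"
proof -
  have "span T \<subseteq> H \<longleftrightarrow> T \<subseteq> H" if "lin_hyperplane H" for T H :: "'a set"
    using that unfolding lin_hyperplane_def by (meson span_minimal span_superset order_trans)
  then show ?thesis
    unfolding hyperplanes_meet_in_line_def by meson
qed

lemma hyperplanes_meet_in_line_iff_normals:
  fixes Ts :: "nat \<Rightarrow> 'a::euclidean_space set"
  shows "hyperplanes_meet_in_line Ts \<longleftrightarrow>
    (\<exists>a. (\<forall>i < DIM('a) - 1. a i \<in> (Ts i)\<^sup>\<bottom>) \<and> dim (a ` {..<DIM('a) - 1}) = DIM('a) - 1)"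
    (is "_ \<longleftrightarrow> (\<exists>a. (\<forall>i < ?m. _) \<and> _)")
proof
  assume "hyperplanes_meet_in_line Ts"
  then obtain Hs where Hs: "\<And>i. i < ?m \<Longrightarrow> lin_hyperplane (Hs i) \<and> Ts i \<subseteq> Hs i"
    and line: "dim (\<Inter>i\<in>{..<?m}. Hs i) = 1"
    unfolding hyperplanes_meet_in_line_def by blast
  have "\<forall>i. \<exists>a. i < ?m \<longrightarrow> Hs i = {x. a \<bullet> x = 0}"
    using Hs lin_hyperplane_iff by blast
  then obtain a where a: "\<And>i. i < ?m \<Longrightarrow> Hs i = {x. a i \<bullet> x = 0}"
    by (metis choice)
  have "(\<Inter>i\<in>{..<?m}. Hs i) = (a ` {..<?m})\<^sup>\<bottom>"
    using a by (simp add: Inter_hyperplanes_eq_orthogonal_comp [symmetric])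
  then have "dim (a ` {..<?m}) = ?m"
    using line dim_orthogonal_comp [of "a ` {..<?m}"] dim_subset_UNIV [of "a ` {..<?m}"] by simp
  moreover have "a i \<in> (Ts i)\<^sup>\<bottom>" if "i < ?m" for i
    using Hs [OF that] a [OF that] by (auto simp: orthogonal_comp_def orthogonal_def inner_commute)
  ultimately show "\<exists>a. (\<forall>i < ?m. a i \<in> (Ts i)\<^sup>\<bottom>) \<and> dim (a ` {..<?m}) = ?m" by blast
next
  assume "\<exists>a. (\<forall>i < ?m. a i \<in> (Ts i)\<^sup>\<bottom>) \<and> dim (a ` {..<?m}) = ?m"
  then obtain a where a: "\<And>i. i < ?m \<Longrightarrow> a i \<in> (Ts i)\<^sup>\<bottom>" and dim: "dim (a ` {..<?m}) = ?m"
    by auto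
  have indep: "independent (a ` {..<?m})"
    by (rule independent_if_dim_eq_card (1)) (use dim in simp_all)
  have "a i \<noteq> 0" if "i < ?m" for i
    using that indep dependent_zero [of "a ` {..<?m}"] by (metis image_eqI lessThan_iff)
  then have "lin_hyperplane {x. a i \<bullet> x = 0}" if "i < ?m" for i
    using that by (simp add: lin_hyperplane_def subspace_hyperplane dim_hyperplane)
  moreover have "Ts i \<subseteq> {x. a i \<bullet> x = 0}" if "i < ?m" for i
    using a [OF that] by (auto simp: orthogonal_comp_def orthogonal_def inner_commute)
  moreover have "dim (\<Inter>i\<in>{..<?m}. {x. a i \<bullet> x = 0}) = 1"
    using dim dim_orthogonal_comp [of "a ` {..<?m}"] DIM_positive [where 'a='a]
    by (simp add: Inter_hyperplanes_eq_orthogonal_comp)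
  ultimately show "hyperplanes_meet_in_line Ts"
    unfolding hyperplanes_meet_in_line_def by (intro exI [of _ "\<lambda>i. {x. a i \<bullet> x = 0}"]) simp
qed

lemma dim_eq_DIM_minus_dim_orthogonal_comp:
  fixes X :: "'a::euclidean_space set"
  shows "dim X = DIM('a) - dim (X\<^sup>\<bottom>)"
proof -
  have "X\<^sup>\<bottom>\<^sup>\<bottom> = span X"
    using orthogonal_comp_self [OF subspace_span, of X] by (simp add: orthogonal_comp_span)
  then show ?thesis
    using dim_orthogonal_comp [of "X\<^sup>\<bottom>"] by simp
qed

lemma extend_independent:
  fixes A B :: "'a::euclidean_space set"
  assumes "independent B" and "card B + k \<le> dim (A \<union> B)"
  obtains U where "U \<subseteq> A" "card U = k" "B \<inter> U = {}" "independent (B \<union> U)"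
proof -
  obtain B' where B': "B \<subseteq> B'" "B' \<subseteq> A \<union> B" "independent B'" "A \<union> B \<subseteq> span B'"
    using maximal_independent_subset_extend [of B "A \<union> B"] assms(1) by blast
  have "finite B'" using B'(3) independent_bound by blast
  moreover have "dim (A \<union> B) = card B'"
    using B' by (intro dim_unique) auto
  ultimately have "k \<le> card (B' - B)"
    using assms(2) B'(1) by (simp add: card_Diff_subset finite_subset)
  then obtain U where U: "U \<subseteq> B' - B" "card U = k"
    by (meson obtain_subset_with_card_n)
  moreover have "independent (B \<union> U)"
    using B'(1,3) U(1) by (meson Diff_subset Un_least independent_mono order_trans)
  ultimately show ?thesis
    using that B'(2) by blast
qed

lemma obtain_split_enumeration:
  assumes "finite U" "finite V"
  obtains a :: "nat \<Rightarrow> 'b" where "a ` {..<card U} = U" "a ` {card U..<card U + card V} = V"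
proof -
  obtain f where f: "bij_betw f {0..<card U} U" using ex_bij_betw_nat_finite assms(1) by blast
  obtain g where g: "bij_betw g {0..<card V} V" using ex_bij_betw_nat_finite assms(2) by blast
  define a where "a i = (if i < card U then f i else g (i - card U))" for i
  have "a ` {..<card U} = f ` {0..<card U}"
    by (auto simp: a_def)
  moreover have "a ` {card U..<card U + card V} = g ` {0..<card V}"
  proof (intro equalityI subsetI)
    fix y assume "y \<in> g ` {0..<card V}"
    then obtain t where "t < card V" "y = g t" by auto
    then show "y \<in> a ` {card U..<card U + card V}"
      by (intro image_eqI [of _ _ "t + card U"]) (auto simp: a_def)
  qed (auto simp: a_def)
  ultimately show ?thesis
    using that f g by (simp add: bij_betw_def)
qed

lemma hyperplanes_meet_in_line_imp_subspace:
  fixes S P :: "'a::euclidean_space set"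
  assumes "hyperplanes_meet_in_line (\<lambda>i. if i < j then S else P)"
    and "z \<in> S" "z \<in> P" "z \<noteq> 0" "j < DIM('a)"
  shows "\<exists>E. subspace E \<and> dim E = j + 1 \<and> P \<subseteq> E \<and> S \<inter> E \<subseteq> span {z}"
proof -
  define m where "m = DIM('a) - 1"
  obtain a where a: "\<And>i. i < m \<Longrightarrow> a i \<in> (if i < j then S else P)\<^sup>\<bottom>" and dim: "dim (a ` {..<m}) = m"
    using assms(1) unfolding hyperplanes_meet_in_line_iff_normals m_def by fastforce
  have indep: "independent (a ` {..<m})" and inj: "inj_on a {..<m}"
    using independent_if_dim_eq_card [of "{..<m}" a] dim by simp_all
  \<comment> \<open>the normals of the last \<open>m - j\<close> hyperplanes cut out the subspace \<open>E\<close>\<close>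
  define E where "E = (a ` {j..<m})\<^sup>\<bottom>"
  have "{j..<m} \<subseteq> {..<m}" by auto
  then have "independent (a ` {j..<m})" "inj_on a {j..<m}"
    using independent_mono [OF indep image_mono] inj_on_subset [OF inj] by auto
  then have "dim (a ` {j..<m}) = m - j"
    by (simp add: dim_eq_card_independent card_image)
  then have "dim E = j + 1"
    using assms(5) by (simp add: E_def dim_orthogonal_comp m_def)
  moreover have "P \<subseteq> E"
    using a by (auto simp: E_def orthogonal_comp_def orthogonal_commute m_def)
  moreover have SE: "S \<inter> E \<subseteq> (a ` {..<m})\<^sup>\<bottom>"
  proof
    fix x assume x: "x \<in> S \<inter> E"
    have "orthogonal (a i) x" if "i < m" for i
      using x a [OF that] that by (cases "i < j") (auto simp: E_def orthogonal_comp_def orthogonal_commute)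
    then show "x \<in> (a ` {..<m})\<^sup>\<bottom>"
      by (auto simp: orthogonal_comp_def)
  qed
  moreover have "(a ` {..<m})\<^sup>\<bottom> = span {z}"
  proof (rule subspace_dim_equal [symmetric])
    show "span {z} \<subseteq> (a ` {..<m})\<^sup>\<bottom>"
      using SE \<open>P \<subseteq> E\<close> assms(2,3) by (intro span_minimal subspace_orthogonal_comp) auto
    show "dim ((a ` {..<m})\<^sup>\<bottom>) \<le> dim (span {z})"
      using dim assms(4) by (simp add: dim_orthogonal_comp m_def)
  qed (auto intro: subspace_orthogonal_comp)
  ultimately show ?thesis
    by (intro exI [of _ E]) (auto simp: E_def subspace_orthogonal_comp)
qed

lemma subspace_imp_hyperplanes_meet_in_line:
  fixes S P E :: "'a::euclidean_space set"
  assumes S: "subspace S" and E: "subspace E" "dim E = j + 1" "P \<subseteq> E" "S \<inter> E \<subseteq> span {z}"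
  shows "hyperplanes_meet_in_line (\<lambda>i. if i < j then S else P)"
proof -
  define m where "m = DIM('a) - 1"
  obtain B where B: "B \<subseteq> E\<^sup>\<bottom>" "independent B" "E\<^sup>\<bottom> \<subseteq> span B" "card B = dim (E\<^sup>\<bottom>)"
    using basis_exists by blast
  have "span B = E\<^sup>\<bottom>"
    using B span_subspace subspace_orthogonal_comp by blast
  then have "B\<^sup>\<bottom> = E"
    using orthogonal_comp_span orthogonal_comp_self [OF E(1)] by metis
  then have "(S\<^sup>\<bottom> \<union> B)\<^sup>\<bottom> = S \<inter> E"
    by (simp add: orthogonal_comp_Un orthogonal_comp_self [OF S])
  moreover have "dim (S \<inter> E) \<le> 1"
    using dim_subset [OF E(4)] dim_le_card [of "span {z}" "{z}"] by (simp add: span_superset)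
  ultimately have "card B + j \<le> dim (S\<^sup>\<bottom> \<union> B)"
    using B(4) E(2) dim_eq_DIM_minus_dim_orthogonal_comp [of "S\<^sup>\<bottom> \<union> B"]
      dim_orthogonal_comp [of E] dim_subset_UNIV [of E] by simp
  then obtain U where U: "U \<subseteq> S\<^sup>\<bottom>" "card U = j" "B \<inter> U = {}" "independent (B \<union> U)"
    using extend_independent [OF B(2)] by blast
  have fin: "finite U" "finite B"
    using U(4) independent_bound by auto
  \<comment> \<open>the first \<open>j\<close> normals come from \<open>S\<^sup>\<bottom>\<close>, the remaining ones form a basis of \<open>E\<^sup>\<bottom>\<close>\<close>
  obtain a where a: "a ` {..<j} = U" "a ` {j..<j + card B} = B"
    using obtain_split_enumeration [OF fin] U(2) by metis
  have m: "j + card B = m"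
    using B(4) E(2) dim_orthogonal_comp [of E] dim_subset_UNIV [of E] by (simp add: m_def)
  have "a ` {..<m} = U \<union> B"
    using a m by (metis ivl_disj_un_one(2) image_Un le_add1 lessThan_atLeast0)
  then have "dim (a ` {..<m}) = m"
    using U fin m by (simp add: dim_eq_card_independent card_Un_disjoint Un_commute inf_commute)
  moreover have "a i \<in> (if i < j then S else P)\<^sup>\<bottom>" if "i < m" for i
  proof (cases "i < j")
    case True
    then show ?thesis using a(1) U(1) by auto
  next
    case False
    then have "a i \<in> E\<^sup>\<bottom>" using that a(2) B(1) m by auto
    then show ?thesis using False orthogonal_comp_anti_mono [OF E(3)] by auto
  qed
  ultimately show ?thesis
    unfolding hyperplanes_meet_in_line_iff_normals m_def by blast
qed

lemma hyperplanes_meet_in_line_iff_subspace: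
  fixes S P :: "'a::euclidean_space set"
  assumes "subspace S" and "z \<in> S" "z \<in> P" "z \<noteq> 0" "j < DIM('a)"
  shows "hyperplanes_meet_in_line (\<lambda>i. if i < j then S else P) \<longleftrightarrow>
    (\<exists>E. subspace E \<and> dim E = j + 1 \<and> P \<subseteq> E \<and> S \<inter> E \<subseteq> span {z})"
  using hyperplanes_meet_in_line_imp_subspace [OF _ assms(2-5)]
    subspace_imp_hyperplanes_meet_in_line [OF assms(1)] by blast

lemma mem_ext_mixed_flat_ball_iff:
  fixes K :: "'a::euclidean_space set"
  assumes K: "convex_body K" and e: "norm e = 1" and z: "norm z = 1" and j: "j < DIM('a)"
    and x\<^sub>0: "x\<^sub>0 \<in> supp_set K z"
  shows "z \<in> ext_mixed (\<lambda>i. if i < j then K else flat_ball e) \<longleftrightarrow>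
    (\<exists>E. subspace E \<and> dim E = j + 1 \<and> e \<in> E \<and> z \<in> E \<and> face_dirs (normal_cone K x\<^sub>0) z \<inter> E \<subseteq> span {z})"
proof -
  define S where "S = face_dirs (normal_cone K x\<^sub>0) z"
  have zN: "z \<in> normal_cone K x\<^sub>0"
    using x\<^sub>0 mem_supp_set_iff [OF K] by blast
  have S: "subspace S" "z \<in> S"
    using subspace_face_dirs [of "normal_cone K x\<^sub>0" z] self_in_face_dirs [OF convex_cone_normal_cone zN]
      zN convex_cone_normal_cone [of K x\<^sub>0] by (simp_all add: S_def convex_cone_def)
  have spans: "(\<lambda>i. span (touching_cone (if i < j then K else flat_ball e) z)) =
        (\<lambda>i. if i < j then S else span {e, z})"
    using span_touching_cone [OF K x\<^sub>0] span_touching_cone_flat_ball [OF e] by (simp add: fun_eq_iff S_def)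
  have "z \<in> ext_mixed (\<lambda>i. if i < j then K else flat_ball e) \<longleftrightarrow>
        hyperplanes_meet_in_line (\<lambda>i. touching_cone (if i < j then K else flat_ball e) z)"
    using z by (simp add: ext_mixed_eq)
  also have "\<dots> \<longleftrightarrow> hyperplanes_meet_in_line (\<lambda>i. if i < j then S else span {e, z})"
    using hyperplanes_meet_in_line_span spans by metis
  also have "\<dots> \<longleftrightarrow> (\<exists>E. subspace E \<and> dim E = j + 1 \<and> span {e, z} \<subseteq> E \<and> S \<inter> E \<subseteq> span {z})"
    using S z j by (intro hyperplanes_meet_in_line_iff_subspace) (auto simp: span_base)
  also have "\<dots> \<longleftrightarrow> (\<exists>E. subspace E \<and> dim E = j + 1 \<and> e \<in> E \<and> z \<in> E \<and> S \<inter> E \<subseteq> span {z})"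
    using span_superset [of "{e, z}"] span_minimal [of "{e, z}"] by blast
  finally show ?thesis
    by (simp add: S_def)
qed

theorem lemma3p11:
  fixes K :: "(real ^ 'n) set" and k :: 'n and j :: nat
  assumes "CARD('n) \<ge> 3"
    and "1 \<le> j" and "j \<le> CARD('n) - 2"
    and "convex_body K"
  defines "e \<equiv> axis k (1::real)"
  defines "BL \<equiv> cball 0 1 \<inter> {x. x \<bullet> e = 0}"
  shows "ext_mixed (\<lambda>i. if i < j then K else BL) =
         {z. norm z = 1 \<and> (\<exists>E \<in> grass_thru e (j + 1). z \<in> ext_rel E (proj_onto E ` K))}"
proof (intro set_eqI)
  fix z :: "real ^ 'n"
  show "z \<in> ext_mixed (\<lambda>i. if i < j then K else BL) \<longleftrightarrow>
        z \<in> {z. norm z = 1 \<and> (\<exists>E \<in> grass_thru e (j + 1). z \<in> ext_rel E (proj_onto E ` K))}"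
  proof (cases "norm z = 1")
    case True
    obtain x\<^sub>0 where x\<^sub>0: "x\<^sub>0 \<in> supp_set K z"
      using supp_set_nonempty [OF assms(4)] by blast
    have e: "norm e = 1"
      unfolding e_def by simp
    have j: "j < DIM(real ^ 'n)"
      using le_less_trans [OF assms(3) diff_less [of 2 "CARD('n)"]] by simp
    from mem_ext_mixed_flat_ball_iff [OF assms(4) e True j x\<^sub>0] show ?thesis
      using mem_ext_rel_proj_iff [OF assms(4) _ True x\<^sub>0] True
      unfolding BL_def grass_thru_def by auto
  qed (simp add: ext_mixed_eq)
qed

end
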